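(* Assume the extended Krylov setup of the context. Let $m=\bar m_k\ge1$, $Y_k\in\mathbb{R}^{2qm\times2qm}$ symmetric, $X_k=V_mY_kV_m^T$, let $m'=\bar m_{k+1}\ge m$, $\widehat Y_k=\mathrm{diag}(Y_k,O_{2q(m'-m)})$, $Q_{m'}=T_{m'}-\widehat Y_kB_{m'}B_{m'}^T$, and let $\widetilde Y$ solve $Q_{m'}\widetilde Y+\widetilde YQ_{m'}^T=-\widehat Y_kB_{m'}B_{m'}^T\widehat Y_k-E_1\gamma\gamma^TE_1^T$. Put $\widetilde X_{k+1}=V_{m'}\widetilde YV_{m'}^T$, $Z_k=\widetilde X_{k+1}-X_k$, and $L_{k+1}=(A-X_kBB^T)\widetilde X_{k+1}+\widetilde X_{k+1}(A-X_kBB^T)^T+X_kBB^TX_k+C^TC$. Define $\alpha_k=\|\mathcal R(X_k)\|_F^2$, $\beta_k=\|L_{k+1}\|_F^2$, $\gamma_k=\langle\mathcal R(X_k),L_{k+1}\rangle_F$, $\delta_k=\|Z_kBB^TZ_k\|_F^2$, $\epsilon_k=\langle\mathcal R(X_k),Z_kBB^TZ_k\rangle_F$, $\zeta_k=\langle L_{k+1},Z_kBB^TZ_k\rangle_F$. Let $D=\widetilde Y-\widehat Y_k$, $W=DB_{m'}B_{m'}^TD$, $R_k=T_mY_k+Y_kT_m^T-Y_kB_mB_m^TY_k+E_1\gamma\gamma^TE_1^T$ (with $E_1\in\mathbb{R}^{2qm\times2q}$), and $N_k=E_{m+1}E_{m+1}^T\underline T_m[Y_k,O_{2qm\times2q}]+[Y_k;O_{2q\times2qm}]\underline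 T_m^TE_{m+1}E_{m+1}^T\in\mathbb{R}^{2q(m+1)\times2q(m+1)}$; for $r\le 2qm'$ let $W_{[r]}$ denote the leading principal $r\times r$ submatrix of $W$. Then $$\alpha_k=\|R_k\|_F^2+2\|Y_k\underline T_m^TE_{m+1}\|_F^2,\qquad \beta_k=2\|\widetilde Y\underline T_{m'}^TE_{m'+1}\|_F^2,\qquad \delta_k=\|W\|_F^2,\qquad \zeta_k=0,$$ $$\gamma_k=\begin{cases}2\langle E_{m+1}^T\underline T_mY_k,\;E_{m'+1}^T\underline T_{m'}\widetilde Y\rangle_F,& m'=m,\\ 0,& m'>m,\end{cases}\qquad \epsilon_k=\begin{cases}\langle R_k,W\rangle_F,& m'=m,\\ \langle R_k,W_{[2qm]}\rangle_F+\langle N_k,W_{[2q(m+1)]}\rangle_F,& m'>m.\end{cases}$$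
   Context: Riccati operator: $\mathcal R(X)=AX+XA^T-XBB^TX+C^TC$. $\langle X,Y\rangle_F=\mathrm{trace}(Y^TX)$. Extended Krylov setup: $A\in\mathbb{R}^{n\times n}$ nonsingular, $B\in\mathbb{R}^{n\times p}$, $C\in\mathbb{R}^{q\times n}$. For nonsingular $M$ and $G\in\mathbb{R}^{n\times s}$, $\mathbf{EK}^\square_m(M,G)=\mathrm{Range}([G,M^{-1}G,MG,M^{-2}G,\dots,M^{m-1}G,M^{-m}G])$. For $m=1,2,\dots$, $V_m\in\mathbb{R}^{n\times 2qm}$ has orthonormal columns spanning $\mathbf{EK}^\square_m(A,C^T)$ (assumed of full dimension $2qm$), the bases are nested: $V_{m+1}=[V_m,\mathcal V_{m+1}]$ with $\mathcal V_{m+1}\in\mathbb{R}^{n\times 2q}$, and $C^T=V_1\gamma$ with $\gamma\in\mathbb{R}^{2q\times q}$. Set $T_m=V_m^TAV_m$, $\underline T_m=V_{m+1}^TAV_m\in\mathbb{R}^{2q(m+1)\times 2qm}$, $B_m=V_m^TB$. $E_1$ denotes the first $2q$ columns of the identity of the appropriate order, and $E_{m+1}\in\mathbb{R}^{2q(m+1)\times 2q}$ the last $2q$ columns of $I_{2q(m+1)}$. $O_r$ / $O_{r\times s}$ are zero matrices; $[M,N]$ and $[M;N]$ denote horizontal and vertical concatenation. *)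

theory Defs
  imports "Jordan_Normal_Form.Matrix"
begin

definition mtrace :: "real mat \<Rightarrow> real" where
  "mtrace M = (\<Sum>i<dim_row M. M $$ (i,i))"

definition frob_inner :: "real mat \<Rightarrow> real mat \<Rightarrow> real" where
  "frob_inner X Y = mtrace (transpose_mat Y * X)"

definition frob_norm :: "real mat \<Rightarrow> real" where
  "frob_norm X = sqrt (frob_inner X X)"

definition col_space :: "real mat \<Rightarrow> real vec set" where
  "col_space M = {M *\<^sub>v x | x. x \<in> carrier_vec (dim_col M)}"

(* generating matrix [G, M^{-1}G, M G, M^{-2}G, ..., M^{m-1}G, M^{-m}G];
   Minv is the inverse of M; block b = 2i is M^i G, block b = 2i+1 is M^{-(i+1)} G *)
definition ek_gen :: "real mat \<Rightarrow> real mat \<Rightarrow> real mat \<Rightarrow> nat \<Rightarrow> real mat" where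
  "ek_gen M Minv G m = mat (dim_row G) (2 * dim_col G * m)
     (\<lambda>(i,j). let s = dim_col G; b = j div s; c = j mod s in
        if even b then (M ^\<^sub>m (b div 2) * G) $$ (i,c)
        else (Minv ^\<^sub>m (b div 2 + 1) * G) $$ (i,c))"

definition EK :: "real mat \<Rightarrow> real mat \<Rightarrow> real mat \<Rightarrow> nat \<Rightarrow> real vec set" where
  "EK M Minv G m = col_space (ek_gen M Minv G m)"

definition riccati :: "real mat \<Rightarrow> real mat \<Rightarrow> real mat \<Rightarrow> real mat \<Rightarrow> real mat" where
  "riccati A B C X = A * X + X * transpose_mat A - X * B * transpose_mat B * X
      + transpose_mat C * C"

definition Efirst :: "nat \<Rightarrow> nat \<Rightarrow> real mat" where
  "Efirst k s = mat k s (\<lambda>(i,j). if i = j then 1 else 0)"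

definition Elast :: "nat \<Rightarrow> nat \<Rightarrow> real mat" where
  "Elast k s = mat k s (\<lambda>(i,j). if i = k - s + j then 1 else 0)"

definition pad_diag :: "real mat \<Rightarrow> nat \<Rightarrow> real mat" where
  "pad_diag Y r = mat r r (\<lambda>(i,j). if i < dim_row Y \<and> j < dim_col Y then Y $$ (i,j) else 0)"

definition pad_right :: "real mat \<Rightarrow> nat \<Rightarrow> real mat" where
  "pad_right Y s = mat (dim_row Y) (dim_col Y + s) (\<lambda>(i,j). if j < dim_col Y then Y $$ (i,j) else 0)"

definition pad_below :: "real mat \<Rightarrow> nat \<Rightarrow> real mat" where
  "pad_below Y s = mat (dim_row Y + s) (dim_col Y) (\<lambda>(i,j). if i < dim_row Y then Y $$ (i,j) else 0)"

definition lead_sub :: "real mat \<Rightarrow> nat \<Rightarrow> real mat" where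
  "lead_sub W r = mat r r (\<lambda>(i,j). W $$ (i,j))"

end

theory Submission
  imports Defs
begin

text \<open>The Arnoldi relation \<open>A V_j = V_(j+1) T_j\<close> of the nested orthonormal extended Krylov
  basis makes each of \<open>R(X_k)\<close>, \<open>L_(k+1)\<close> and \<open>Z_k B B^T Z_k\<close> a congruence \<open>V M V^T\<close> of a
  symmetric block matrix \<open>M = [M11, H^T; H, 0]\<close> whose last block row and column belong to the
  newest \<open>2q\<close> basis vectors. For \<open>R(X_k)\<close> the leading block is the projected residual \<open>R_k\<close>; for
  \<open>L_(k+1)\<close> it vanishes because \<open>Yt\<close> solves the projected Lyapunov equation; \<open>Z_k B B^T Z_k\<close> has
  only the leading block \<open>W\<close>. As \<open>V\<close> has orthonormal columns and the three block positions are
  mutually orthogonal, \<open><V M V^T, V M' V^T> = <M11, M'11> + 2 <H, H'>\<close>, which yields all six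
  formulas. When \<open>m' > m\<close>, \<open>R(X_k)\<close> is supported on the leading \<open>2q(m+1)\<close> columns of
  \<open>V_(m'+1)\<close> and therefore only sees leading principal submatrices of \<open>W\<close>.\<close>

lemma assoc_mult_mat_dim:
  "dim_col A = dim_row B \<Longrightarrow> dim_col B = dim_row C \<Longrightarrow> A * B * C = A * (B * C :: 'a :: comm_ring_1 mat)"
  by (rule assoc_mult_mat[of A "dim_row A" "dim_col A" B "dim_col B" C "dim_col C"]) auto

lemma add_mult_distrib_mat_dim:
  "dim_row A = dim_row B \<Longrightarrow> dim_col A = dim_col B \<Longrightarrow> dim_col B = dim_row C \<Longrightarrow>
   (A + B) * C = A * C + B * (C :: 'a :: comm_ring_1 mat)"
  by (rule add_mult_distrib_mat[of A "dim_row A" "dim_col A"]) auto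

lemma mult_add_distrib_mat_dim:
  "dim_row B = dim_row C \<Longrightarrow> dim_col B = dim_col C \<Longrightarrow> dim_col A = dim_row B \<Longrightarrow>
   A * (B + C) = A * B + A * (C :: 'a :: comm_ring_1 mat)"
  by (rule mult_add_distrib_mat[of A "dim_row A" "dim_col A"]) auto

lemma minus_mult_distrib_mat_dim:
  "dim_row A = dim_row B \<Longrightarrow> dim_col A = dim_col B \<Longrightarrow> dim_col B = dim_row C \<Longrightarrow>
   (A - B) * C = A * C - B * (C :: 'a :: comm_ring_1 mat)"
  by (rule minus_mult_distrib_mat[of A "dim_row A" "dim_col A"]) auto

lemma mult_minus_distrib_mat_dim:
  "dim_row B = dim_row C \<Longrightarrow> dim_col B = dim_col C \<Longrightarrow> dim_col A = dim_row B \<Longrightarrow>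
   A * (B - C) = A * B - A * (C :: 'a :: comm_ring_1 mat)"
  by (rule mult_minus_distrib_mat[of A "dim_row A" "dim_col A"]) auto

lemma transpose_mult_dim:
  "dim_col A = dim_row B \<Longrightarrow> transpose_mat (A * B) = transpose_mat B * transpose_mat (A :: 'a :: comm_ring_1 mat)"
  by (rule transpose_mult[of A "dim_row A" "dim_col A"]) auto

lemma transpose_add_dim:
  "dim_row A = dim_row B \<Longrightarrow> dim_col A = dim_col B \<Longrightarrow>
   transpose_mat (A + B) = transpose_mat A + transpose_mat (B :: 'a :: comm_ring_1 mat)"
  by (rule transpose_add[of A "dim_row A" "dim_col A"]) auto

lemma transpose_minus_dim:
  "dim_row A = dim_row B \<Longrightarrow> dim_col A = dim_col B \<Longrightarrow>
   transpose_mat (A - B) = transpose_mat A - transpose_mat (B :: 'a :: comm_ring_1 mat)"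
  by (rule transpose_minus[of A "dim_row A" "dim_col A"]) auto

text \<open>Rewriting with these rules, given the dimensions of all factors as simp rules, normalises a
  matrix polynomial into a sum of right-nested products.\<close>
lemmas mat_dim_simps = assoc_mult_mat_dim add_mult_distrib_mat_dim mult_add_distrib_mat_dim
  minus_mult_distrib_mat_dim mult_minus_distrib_mat_dim transpose_mult_dim transpose_add_dim
  transpose_minus_dim

section \<open>The Frobenius inner product\<close>

lemma frob_inner_eq_sum:
  assumes "X \<in> carrier_mat r c" "Y \<in> carrier_mat r c"
  shows "frob_inner X Y = (\<Sum>i<r. \<Sum>j<c. X $$ (i,j) * Y $$ (i,j))"
proof -
  have "frob_inner X Y = (\<Sum>j<c. \<Sum>i<r. Y $$ (i,j) * X $$ (i,j))"
    unfolding frob_inner_def mtrace_def using assms by (simp add: scalar_prod_def atLeast0LessThan)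
  also have "\<dots> = (\<Sum>i<r. \<Sum>j<c. X $$ (i,j) * Y $$ (i,j))"
    by (subst sum.swap) (simp add: mult.commute)
  finally show ?thesis .
qed

lemma frob_inner_transpose:
  assumes "X \<in> carrier_mat r c" "Y \<in> carrier_mat r c"
  shows "frob_inner (transpose_mat X) (transpose_mat Y) = frob_inner X Y"
  using assms by (simp add: frob_inner_eq_sum[of _ c r] frob_inner_eq_sum[of _ r c]) (rule sum.swap)

lemma frob_inner_add_left:
  "X \<in> carrier_mat r c \<Longrightarrow> X' \<in> carrier_mat r c \<Longrightarrow> Y \<in> carrier_mat r c \<Longrightarrow>
   frob_inner (X + X') Y = frob_inner X Y + frob_inner X' Y"
  by (simp add: frob_inner_eq_sum[of _ r c] algebra_simps sum.distrib)

lemma frob_inner_add_right: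
  "X \<in> carrier_mat r c \<Longrightarrow> Y \<in> carrier_mat r c \<Longrightarrow> Y' \<in> carrier_mat r c \<Longrightarrow>
   frob_inner X (Y + Y') = frob_inner X Y + frob_inner X Y'"
  by (simp add: frob_inner_eq_sum[of _ r c] algebra_simps sum.distrib)

lemma frob_inner_zero_left: "Y \<in> carrier_mat r c \<Longrightarrow> frob_inner (0\<^sub>m r c) Y = 0"
  by (simp add: frob_inner_eq_sum[of _ r c])

lemma frob_inner_zero_right: "X \<in> carrier_mat r c \<Longrightarrow> frob_inner X (0\<^sub>m r c) = 0"
  by (simp add: frob_inner_eq_sum[of _ r c])

lemma frob_norm_square: "(frob_norm X)\<^sup>2 = frob_inner X X"
proof -
  have "frob_inner X X \<ge> 0"
    by (simp add: frob_inner_eq_sum[of X "dim_row X" "dim_col X"] sum_nonneg)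
  then show ?thesis unfolding frob_norm_def by simp
qed

lemma frob_norm_transpose: "frob_norm (transpose_mat X) = frob_norm X"
  unfolding frob_norm_def by (simp add: frob_inner_transpose[of X "dim_row X" "dim_col X"])

lemma frob_inner_mult_left:
  assumes U: "U \<in> carrier_mat r k" and X: "X \<in> carrier_mat k c" and Y: "Y \<in> carrier_mat r c"
  shows "frob_inner (U * X) Y = frob_inner X (transpose_mat U * Y)"
proof -
  have "frob_inner (U * X) Y = (\<Sum>i<r. \<Sum>j<c. \<Sum>l<k. U $$ (i,l) * X $$ (l,j) * Y $$ (i,j))"
    using assms by (simp add: frob_inner_eq_sum[of _ r c] scalar_prod_def atLeast0LessThan sum_distrib_right)
  also have "\<dots> = (\<Sum>l<k. \<Sum>j<c. \<Sum>i<r. U $$ (i,l) * X $$ (l,j) * Y $$ (i,j))"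
    by (subst sum.swap, subst (1 2) sum.swap) (rule refl)
  also have "\<dots> = frob_inner X (transpose_mat U * Y)"
    using assms by (simp add: frob_inner_eq_sum[of _ k c] scalar_prod_def atLeast0LessThan
        sum_distrib_left algebra_simps)
  finally show ?thesis .
qed

lemma frob_inner_mult_right:
  assumes X: "X \<in> carrier_mat r k" and U: "U \<in> carrier_mat k c" and Y: "Y \<in> carrier_mat r c"
  shows "frob_inner (X * U) Y = frob_inner X (Y * transpose_mat U)"
proof -
  have "frob_inner (X * U) Y = frob_inner (transpose_mat U * transpose_mat X) (transpose_mat Y)"
    using assms frob_inner_transpose[of "X * U" r c Y] by (simp add: transpose_mult_dim)
  also have "\<dots> = frob_inner (transpose_mat X) (transpose_mat (Y * transpose_mat U))"
    using assms by (simp add: frob_inner_mult_left[of _ c k] transpose_mult_dim)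
  also have "\<dots> = frob_inner X (Y * transpose_mat U)"
    using assms by (intro frob_inner_transpose) auto
  finally show ?thesis .
qed

lemma frob_inner_conj_orthonormal:
  assumes E: "E \<in> carrier_mat r k" "transpose_mat E * E = 1\<^sub>m k"
    and F: "F \<in> carrier_mat c l" "transpose_mat F * F = 1\<^sub>m l"
    and M: "M \<in> carrier_mat k l" and N: "N \<in> carrier_mat k l"
  shows "frob_inner (E * M * transpose_mat F) (E * N * transpose_mat F) = frob_inner M N"
proof -
  have "frob_inner (E * M * transpose_mat F) (E * N * transpose_mat F)
      = frob_inner (E * (M * transpose_mat F)) (E * (N * transpose_mat F))"
    using assms by (simp add: assoc_mult_mat_dim)
  also have "\<dots> = frob_inner (M * transpose_mat F) (transpose_mat E * (E * (N * transpose_mat F)))"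
    using assms by (intro frob_inner_mult_left) auto
  also have "transpose_mat E * (E * (N * transpose_mat F)) = (transpose_mat E * E) * (N * transpose_mat F)"
    using assms by (intro assoc_mult_mat_dim[symmetric]) auto
  also have "\<dots> = N * transpose_mat F"
    using assms by simp
  also have "frob_inner (M * transpose_mat F) (N * transpose_mat F)
      = frob_inner M (N * transpose_mat F * transpose_mat (transpose_mat F))"
    using assms by (intro frob_inner_mult_right) auto
  also have "N * transpose_mat F * transpose_mat (transpose_mat F) = N * (transpose_mat F * F)"
    using assms by (simp add: assoc_mult_mat_dim)
  finally show ?thesis using assms by simp
qed

lemma frob_inner_conj_orthogonal_left:
  assumes "E \<in> carrier_mat r k" "E' \<in> carrier_mat r k'" "F \<in> carrier_mat c l" "F' \<in> carrier_mat c l'"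
    and "M \<in> carrier_mat k l" "N \<in> carrier_mat k' l'" and EE': "transpose_mat E * E' = 0\<^sub>m k k'"
  shows "frob_inner (E * M * transpose_mat F) (E' * N * transpose_mat F') = 0"
proof -
  have "frob_inner (E * M * transpose_mat F) (E' * N * transpose_mat F')
      = frob_inner (E * (M * transpose_mat F)) (E' * (N * transpose_mat F'))"
    using assms by (simp add: assoc_mult_mat_dim)
  also have "\<dots> = frob_inner (M * transpose_mat F) (transpose_mat E * (E' * (N * transpose_mat F')))"
    using assms by (intro frob_inner_mult_left) auto
  also have "transpose_mat E * (E' * (N * transpose_mat F')) = (transpose_mat E * E') * (N * transpose_mat F')"
    using assms by (intro assoc_mult_mat_dim[symmetric]) auto
  also have "\<dots> = 0\<^sub>m k c"
    using assms unfolding EE' by auto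
  finally show ?thesis
    using assms by (simp add: frob_inner_zero_right[of _ k c])
qed

lemma frob_inner_conj_orthogonal_right:
  assumes "E \<in> carrier_mat r k" "E' \<in> carrier_mat r k'" "F \<in> carrier_mat c l" "F' \<in> carrier_mat c l'"
    and "M \<in> carrier_mat k l" "N \<in> carrier_mat k' l'" and "transpose_mat F * F' = 0\<^sub>m l l'"
  shows "frob_inner (E * M * transpose_mat F) (E' * N * transpose_mat F') = 0"
proof -
  have "frob_inner (E * M * transpose_mat F) (E' * N * transpose_mat F')
      = frob_inner (transpose_mat (E * M * transpose_mat F)) (transpose_mat (E' * N * transpose_mat F'))"
    using assms by (intro frob_inner_transpose[symmetric, of _ r c]) auto
  also have "\<dots> = frob_inner (F * transpose_mat M * transpose_mat E) (F' * transpose_mat N * transpose_mat E')"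
    using assms by (simp add: transpose_mult_dim)
  also have "\<dots> = 0"
    using assms by (intro frob_inner_conj_orthogonal_left[of _ c l _ l' _ r k _ k']) auto
  finally show ?thesis .
qed

section \<open>Symmetric block matrices\<close>

definition sym_corner :: "real mat \<Rightarrow> real mat \<Rightarrow> real mat \<Rightarrow> real mat" where
  "sym_corner E F H = F * H * transpose_mat E + E * transpose_mat H * transpose_mat F"

text \<open>In the block coordinates given by the columns of \<open>[E, F]\<close> this is the symmetric matrix
  \<open>[M, H\<^sup>T; H, 0]\<close>.\<close>
definition sym_block :: "real mat \<Rightarrow> real mat \<Rightarrow> real mat \<Rightarrow> real mat \<Rightarrow> real mat" where
  "sym_block E F M H = E * M * transpose_mat E + sym_corner E F H"

lemma sym_block_carrier:
  "E \<in> carrier_mat r k \<Longrightarrow> F \<in> carrier_mat r s \<Longrightarrow> M \<in> carrier_mat k k \<Longrightarrow> H \<in> carrier_mat s k \<Longrightarrow>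
   sym_block E F M H \<in> carrier_mat r r"
  unfolding sym_block_def sym_corner_def by auto

lemma frob_inner_sym_block:
  assumes E: "E \<in> carrier_mat r k" "transpose_mat E * E = 1\<^sub>m k"
    and F: "F \<in> carrier_mat r s" "transpose_mat F * F = 1\<^sub>m s"
    and EF: "transpose_mat E * F = 0\<^sub>m k s"
    and M: "M \<in> carrier_mat k k" "M' \<in> carrier_mat k k" and H: "H \<in> carrier_mat s k" "H' \<in> carrier_mat s k"
  shows "frob_inner (sym_block E F M H) (sym_block E F M' H') = frob_inner M M' + 2 * frob_inner H H'"
proof -
  have FE: "transpose_mat F * E = 0\<^sub>m s k"
    using arg_cong[OF EF, of transpose_mat] E F by (simp add: transpose_mult_dim)
  have HT: "transpose_mat H \<in> carrier_mat k s" "transpose_mat H' \<in> carrier_mat k s" using H by auto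
  note c = E(1) F(1) M H HT
  have cross:
    "frob_inner (E * M * transpose_mat E) (F * H' * transpose_mat E) = 0"
    "frob_inner (E * M * transpose_mat E) (E * transpose_mat H' * transpose_mat F) = 0"
    "frob_inner (F * H * transpose_mat E) (E * M' * transpose_mat E) = 0"
    "frob_inner (F * H * transpose_mat E) (E * transpose_mat H' * transpose_mat F) = 0"
    "frob_inner (E * transpose_mat H * transpose_mat F) (E * M' * transpose_mat E) = 0"
    "frob_inner (E * transpose_mat H * transpose_mat F) (F * H' * transpose_mat E) = 0"
    by (rule frob_inner_conj_orthogonal_left[OF E(1) F(1) E(1) E(1) M(1) H(2) EF]
        frob_inner_conj_orthogonal_right[OF E(1) E(1) E(1) F(1) M(1) HT(2) EF]
        frob_inner_conj_orthogonal_left[OF F(1) E(1) E(1) E(1) H(1) M(2) FE]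
        frob_inner_conj_orthogonal_left[OF F(1) E(1) E(1) F(1) H(1) HT(2) FE]
        frob_inner_conj_orthogonal_right[OF E(1) E(1) F(1) E(1) HT(1) M(2) FE]
        frob_inner_conj_orthogonal_left[OF E(1) F(1) F(1) E(1) HT(1) H(2) EF])+
  have "frob_inner (sym_block E F M H) (sym_block E F M' H')
      = frob_inner (E * M * transpose_mat E) (E * M' * transpose_mat E)
      + frob_inner (F * H * transpose_mat E) (F * H' * transpose_mat E)
      + frob_inner (E * transpose_mat H * transpose_mat F) (E * transpose_mat H' * transpose_mat F)"
    using c cross unfolding sym_block_def sym_corner_def
    by (simp add: frob_inner_add_left[of _ r r] frob_inner_add_right[of _ r r])
  also have "\<dots> = frob_inner M M' + frob_inner H H' + frob_inner (transpose_mat H) (transpose_mat H')"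
    using frob_inner_conj_orthonormal[OF E E M] frob_inner_conj_orthonormal[OF F E H]
      frob_inner_conj_orthonormal[OF E F HT] c by simp
  also have "frob_inner (transpose_mat H) (transpose_mat H') = frob_inner H H'"
    using H by (rule frob_inner_transpose)
  finally show ?thesis by simp
qed

lemma Efirst_carrier [simp]:
  "dim_row (Efirst k s) = k" "dim_col (Efirst k s) = s" "Efirst k s \<in> carrier_mat k s"
  by (auto simp: Efirst_def)

lemma Elast_carrier [simp]:
  "dim_row (Elast k s) = k" "dim_col (Elast k s) = s" "Elast k s \<in> carrier_mat k s"
  by (auto simp: Elast_def)

lemma if_one_zero_mult [simp]:
  "(if P then (1::real) else 0) * y = (if P then y else 0)"
  "y * (if P then (1::real) else 0) = (if P then y else 0)"
  by auto

lemma transpose_Efirst_mult_Efirst: "r \<le> K \<Longrightarrow> transpose_mat (Efirst K r) * Efirst K r = 1\<^sub>m r"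
  by (rule eq_matI) (auto simp: Efirst_def scalar_prod_def atLeast0LessThan sum.delta)

lemma transpose_Elast_mult_Elast: "s \<le> K \<Longrightarrow> transpose_mat (Elast K s) * Elast K s = 1\<^sub>m s"
  by (rule eq_matI) (auto simp: Elast_def scalar_prod_def atLeast0LessThan sum.delta)

lemma transpose_Efirst_mult_Elast: "r + s \<le> K \<Longrightarrow> transpose_mat (Efirst K r) * Elast K s = 0\<^sub>m r s"
  by (rule eq_matI) (auto simp: Elast_def Efirst_def scalar_prod_def atLeast0LessThan sum.delta)

lemma Efirst_mult_Efirst: "r \<le> k \<Longrightarrow> k \<le> K \<Longrightarrow> Efirst K k * Efirst k r = Efirst K r"
  by (rule eq_matI) (auto simp: Efirst_def scalar_prod_def atLeast0LessThan sum.delta)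

lemma Efirst_Elast_partition:
  assumes "r + s = K"
  shows "Efirst K r * transpose_mat (Efirst K r) + Elast K s * transpose_mat (Elast K s) = 1\<^sub>m K"
proof -
  have shift: "(\<Sum>l<s. if i = r + l then f l else (0::real)) = (if r \<le> i \<and> i < r + s then f (i - r) else 0)"
    for i and f :: "nat \<Rightarrow> real"
    by (subst sum.cong[OF refl, of _ _ "\<lambda>l. if l = i - r then (if r \<le> i then f l else 0) else 0"])
      (auto simp: sum.delta)
  show ?thesis
    using assms by (intro eq_matI) (auto simp: Elast_def Efirst_def scalar_prod_def atLeast0LessThan sum.delta shift)
qed

lemma pad_diag_eq_Efirst:
  "Y \<in> carrier_mat a a \<Longrightarrow> a \<le> b \<Longrightarrow> pad_diag Y b = Efirst b a * Y * transpose_mat (Efirst b a)"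
  by (rule eq_matI) (auto simp: pad_diag_def Efirst_def scalar_prod_def atLeast0LessThan sum.delta)

lemma pad_right_eq_Efirst: "dim_col Y = a \<Longrightarrow> pad_right Y s = Y * transpose_mat (Efirst (a + s) a)"
  by (rule eq_matI) (auto simp: pad_right_def Efirst_def scalar_prod_def atLeast0LessThan sum.delta)

lemma pad_below_eq_Efirst: "dim_row Y = a \<Longrightarrow> pad_below Y s = Efirst (a + s) a * Y"
  by (rule eq_matI) (auto simp: pad_below_def Efirst_def scalar_prod_def atLeast0LessThan sum.delta)

lemma lead_sub_eq_Efirst:
  "W \<in> carrier_mat b b \<Longrightarrow> r \<le> b \<Longrightarrow> lead_sub W r = transpose_mat (Efirst b r) * W * Efirst b r"
  by (rule eq_matI) (auto simp: lead_sub_def Efirst_def scalar_prod_def atLeast0LessThan sum.delta)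

section \<open>Extended Krylov subspaces\<close>

lemma pow_mat_Suc_left: "A \<in> carrier_mat n n \<Longrightarrow> A * A ^\<^sub>m k = A ^\<^sub>m Suc (k :: nat)"
proof (induction k)
  case (Suc k)
  have "A * A ^\<^sub>m Suc k = (A * A ^\<^sub>m k) * A"
    using Suc.prems by (simp add: assoc_mult_mat[of A n n _ n A n])
  then show ?case using Suc by simp
qed simp

lemma mult_pow_mat_right_inverse:
  "A \<in> carrier_mat n n \<Longrightarrow> Ainv \<in> carrier_mat n n \<Longrightarrow> A * Ainv = 1\<^sub>m n \<Longrightarrow>
   A * Ainv ^\<^sub>m Suc k = Ainv ^\<^sub>m k"
proof (induction k)
  case (Suc k)
  have "A * Ainv ^\<^sub>m Suc (Suc k) = (A * Ainv ^\<^sub>m Suc k) * Ainv"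
    using Suc.prems by (simp add: assoc_mult_mat[of A n n _ n Ainv n] del: pow_mat.simps) simp
  then show ?case using Suc by simp
qed simp

definition ek_block :: "real mat \<Rightarrow> real mat \<Rightarrow> real mat \<Rightarrow> nat \<Rightarrow> real mat" where
  "ek_block M Minv G b = (if even b then M ^\<^sub>m (b div 2) * G else Minv ^\<^sub>m (b div 2 + 1) * G)"

text \<open>Multiplication by \<open>M\<close> sends \<open>M^i G\<close> to \<open>M^(i+1) G\<close> and \<open>M^-(i+1) G\<close> to \<open>M^-i G\<close>;
  \<open>ek_succ\<close> is the induced map on the block indices of \<open>ek_block\<close>.\<close>
definition ek_succ :: "nat \<Rightarrow> nat" where
  "ek_succ b = (if even b then b + 2 else if b = 1 then 0 else b - 2)"

lemma ek_succ_less: "b < 2 * j \<Longrightarrow> ek_succ b < 2 * Suc j"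
  by (auto simp: ek_succ_def)

lemma dim_ek_gen [simp]:
  "dim_row (ek_gen M Minv G m) = dim_row G" "dim_col (ek_gen M Minv G m) = 2 * dim_col G * m"
  by (simp_all add: ek_gen_def)

lemma index_ek_gen:
  assumes "i < dim_row G" "b < 2 * m" "c < dim_col G"
  shows "ek_gen M Minv G m $$ (i, b * dim_col G + c) = ek_block M Minv G b $$ (i, c)"
proof -
  have "b * dim_col G + c < Suc b * dim_col G" using assms(3) by simp
  also have "\<dots> \<le> (2 * m) * dim_col G" using assms(2) by (intro mult_le_mono1) simp
  also have "\<dots> = 2 * dim_col G * m" by simp
  finally show ?thesis using assms by (simp add: ek_gen_def ek_block_def)
qed

lemma mult_ek_block:
  assumes A: "A \<in> carrier_mat n n" "Ainv \<in> carrier_mat n n" "A * Ainv = 1\<^sub>m n"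
    and G: "G \<in> carrier_mat n s"
  shows "A * ek_block A Ainv G b = ek_block A Ainv G (ek_succ b)"
proof -
  have assoc: "A * (P * G) = (A * P) * G" if "P \<in> carrier_mat n n" for P
    using A G that by (simp add: assoc_mult_mat[of A n n P n G s])
  have "even b \<or> b = 1 \<or> (odd b \<and> b \<ge> 3)" by presburger
  then consider "even b" | "b = 1" | "odd b" "b \<ge> 3" by blast
  then show ?thesis
  proof cases
    case 1
    then show ?thesis using A G
      by (simp add: ek_block_def ek_succ_def assoc pow_mat_Suc_left)
  next
    case 2
    then show ?thesis using A G
      by (simp add: ek_block_def ek_succ_def assoc)
  next
    case 3
    then have "odd (b - 2)" "(b - 2) div 2 + 1 = b div 2" by presburger+
    then show ?thesis using A G 3
      by (simp add: ek_block_def ek_succ_def assoc mult_pow_mat_right_inverse[OF A] del: pow_mat.simps)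
  qed
qed

lemma mult_ek_gen:
  assumes A: "A \<in> carrier_mat n n" "Ainv \<in> carrier_mat n n" "A * Ainv = 1\<^sub>m n"
    and G: "G \<in> carrier_mat n s"
  shows "A * ek_gen A Ainv G j = ek_gen A Ainv G (Suc j) *
    mat (2 * s * Suc j) (2 * s * j) (\<lambda>(r, c). if r = ek_succ (c div s) * s + c mod s then 1 else 0)"
    (is "_ = _ * ?S")
proof (rule eq_matI)
  fix i jj assume "i < dim_row (ek_gen A Ainv G (Suc j) * ?S)" "jj < dim_col (ek_gen A Ainv G (Suc j) * ?S)"
  then have i: "i < n" and jj: "jj < 2 * s * j" using G by auto
  define b c where "b = jj div s" and "c = jj mod s"
  have s: "s > 0" using jj by (cases s) auto
  have c: "c < s" and jj_eq: "jj = b * s + c" using s by (auto simp: b_def c_def)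
  have b: "b < 2 * j"
    using jj s unfolding b_def by (simp add: less_mult_imp_div_less mult.commute mult.left_commute)
  have idx: "ek_succ b * s + c < 2 * s * Suc j"
  proof -
    have "ek_succ b * s + c < Suc (ek_succ b) * s" using c by simp
    also have "\<dots> \<le> (2 * Suc j) * s" using ek_succ_less[OF b] by (intro mult_le_mono1) simp
    finally show ?thesis by (simp add: mult.commute mult.left_commute)
  qed
  have blk: "ek_block A Ainv G b' \<in> carrier_mat n s" for b'
    using A G by (auto simp: ek_block_def simp del: pow_mat.simps intro!: mult_carrier_mat[of _ n n])
  have "col (ek_gen A Ainv G j) jj = col (ek_block A Ainv G b) c"
  proof (rule eq_vecI)
    fix l assume "l < dim_vec (col (ek_block A Ainv G b) c)"
    then have "l < n" using blk[of b] by simp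
    moreover have "b * s + c < 2 * s * j" using jj jj_eq by simp
    ultimately show "col (ek_gen A Ainv G j) jj $ l = col (ek_block A Ainv G b) c $ l"
      using G b c blk[of b] index_ek_gen[of l G b j c] by (simp add: jj_eq)
  qed (use G blk[of b] in simp)
  then have "(A * ek_gen A Ainv G j) $$ (i, jj) = (A * ek_block A Ainv G b) $$ (i, c)"
    using A G i jj c blk[of b] by simp
  also have "\<dots> = ek_gen A Ainv G (Suc j) $$ (i, ek_succ b * s + c)"
    using mult_ek_block[OF A G] index_ek_gen[of i G "ek_succ b" "Suc j" c] G i c ek_succ_less[OF b]
    by simp
  also have "\<dots> = (ek_gen A Ainv G (Suc j) * ?S) $$ (i, jj)"
    using G i jj idx by (simp add: b_def c_def scalar_prod_def atLeast0LessThan sum.delta)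
  finally show "(A * ek_gen A Ainv G j) $$ (i, jj) = (ek_gen A Ainv G (Suc j) * ?S) $$ (i, jj)" .
qed (use A G in auto)

lemma mult_vec_mem_EK_Suc:
  assumes A: "A \<in> carrier_mat n n" "Ainv \<in> carrier_mat n n" "A * Ainv = 1\<^sub>m n"
    and G: "G \<in> carrier_mat n s" and x: "x \<in> EK A Ainv G j"
  shows "A *\<^sub>v x \<in> EK A Ainv G (Suc j)"
proof -
  let ?S = "mat (2 * s * Suc j) (2 * s * j) (\<lambda>(r, c). if r = ek_succ (c div s) * s + c mod s then 1 else 0)"
  obtain y where y: "y \<in> carrier_vec (2 * s * j)" "x = ek_gen A Ainv G j *\<^sub>v y"
    using x G unfolding EK_def col_space_def by auto
  have gen: "ek_gen A Ainv G j \<in> carrier_mat n (2 * s * j)" "ek_gen A Ainv G (Suc j) \<in> carrier_mat n (2 * s * Suc j)"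
    using G by (auto intro: carrier_matI)
  have "A *\<^sub>v x = (A * ek_gen A Ainv G j) *\<^sub>v y"
    using A gen y by simp
  also have "\<dots> = ek_gen A Ainv G (Suc j) *\<^sub>v (?S *\<^sub>v y)"
    unfolding mult_ek_gen[OF A G] by (rule assoc_mult_mat_vec) (use gen y in auto)
  moreover have "?S *\<^sub>v y \<in> carrier_vec (2 * s * Suc j)"
    by (rule mult_mat_vec_carrier[OF mat_carrier y(1)])
  ultimately show ?thesis
    unfolding EK_def col_space_def using G by (intro CollectI exI[of _ "?S *\<^sub>v y"] conjI) simp_all
qed

lemma col_mem_col_space: "M \<in> carrier_mat r c \<Longrightarrow> i < c \<Longrightarrow> col M i \<in> col_space (M :: real mat)"
proof -
  assume "M \<in> carrier_mat r c" "i < c"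
  then have "M *\<^sub>v unit_vec c i = col M i"
    by (intro eq_vecI) (auto simp: scalar_prod_def unit_vec_def atLeast0LessThan sum.delta)
  then show ?thesis
    unfolding col_space_def using \<open>M \<in> carrier_mat r c\<close> by (metis (mono_tags) CollectI carrier_matD(2) unit_vec_carrier)
qed

lemma orthonormal_projection_eq:
  assumes U: "U \<in> carrier_mat n k" "transpose_mat U * U = 1\<^sub>m k" and M: "M \<in> carrier_mat n c"
    and cols: "\<And>i. i < c \<Longrightarrow> col M i \<in> col_space U"
  shows "U * (transpose_mat U * M) = M"
proof (rule mat_col_eqI)
  fix i assume "i < dim_col M"
  then have i: "i < c" using M by simp
  obtain y where y: "y \<in> carrier_vec k" "col M i = U *\<^sub>v y"
    using cols[OF i] U unfolding col_space_def by auto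
  have "col (U * (transpose_mat U * M)) i = U *\<^sub>v (transpose_mat U *\<^sub>v (U *\<^sub>v y))"
    using U M i y by (simp add: col_mult2[of _ n k _ c] col_mult2[of _ k n _ c] del: col_mult)
  also have "transpose_mat U *\<^sub>v (U *\<^sub>v y) = (transpose_mat U * U) *\<^sub>v y"
    by (rule assoc_mult_mat_vec[symmetric]) (use U y in auto)
  also have "U *\<^sub>v ((transpose_mat U * U) *\<^sub>v y) = col M i" using U y by simp
  finally show "col (U * (transpose_mat U * M)) i = col M i" .
qed (use U M in auto)

lemma arnoldi_relation:
  assumes A: "A \<in> carrier_mat n n" "Ainv \<in> carrier_mat n n" "A * Ainv = 1\<^sub>m n"
    and G: "G \<in> carrier_mat n s"
    and V: "V \<in> carrier_mat n (2 * s * j)" "col_space V = EK A Ainv G j"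
    and U: "U \<in> carrier_mat n k" "transpose_mat U * U = 1\<^sub>m k" "col_space U = EK A Ainv G (Suc j)"
  shows "A * V = U * (transpose_mat U * A * V)"
proof -
  have "U * (transpose_mat U * (A * V)) = A * V"
  proof (rule orthonormal_projection_eq[OF U(1,2)])
    fix i assume i: "i < 2 * s * j"
    have "col V i \<in> EK A Ainv G j" using col_mem_col_space[OF V(1) i] V(2) by simp
    then have "A *\<^sub>v col V i \<in> col_space U" using mult_vec_mem_EK_Suc[OF A G] U(3) by simp
    then show "col (A * V) i \<in> col_space U"
      using A V i by (simp add: col_mult2[of _ n n _ "2 * s * j"] del: col_mult)
  qed (use A V in simp)
  then show ?thesis using A U V by (simp add: assoc_mult_mat_dim)
qed

lemma nested_basis_eq_Efirst:
  assumes V_dim: "\<And>j. 1 \<le> j \<Longrightarrow> j \<le> M \<Longrightarrow> V j \<in> carrier_mat n (d * j)"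
    and V_nested: "\<And>j i c. 1 \<le> j \<Longrightarrow> j < M \<Longrightarrow> i < n \<Longrightarrow> c < d * j \<Longrightarrow> V (Suc j) $$ (i, c) = V j $$ (i, c)"
    and jk: "1 \<le> j" "j \<le> k" "k \<le> M"
  shows "V j = V k * Efirst (d * k) (d * j)"
proof -
  have entries: "V k' $$ (i, c) = V j $$ (i, c)" if "j \<le> k'" "k' \<le> M" "i < n" "c < d * j" for k' i c
    using that
  proof (induction k' rule: dec_induct)
    case (step k')
    have "c < d * k'" using step.prems(3) step.hyps(2) by (meson less_le_trans mult_le_mono2 step.hyps(1))
    then show ?case using step jk by (simp add: V_nested)
  qed simp
  have Vj: "V j \<in> carrier_mat n (d * j)" and Vk: "V k \<in> carrier_mat n (d * k)" using V_dim jk by auto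
  have "c < d * k" if "c < d * j" for c
    using that jk by (meson less_le_trans mult_le_mono2)
  then show ?thesis
    using Vj Vk entries[of k] jk
    by (intro eq_matI) (auto simp: Efirst_def scalar_prod_def atLeast0LessThan sum.delta)
qed

lemma extended_krylov_basis:
  fixes V :: "nat \<Rightarrow> real mat"
  assumes A: "A \<in> carrier_mat n n" "Ainv \<in> carrier_mat n n" "A * Ainv = 1\<^sub>m n" and C: "C \<in> carrier_mat q n"
    and V_dim: "\<And>j. 1 \<le> j \<Longrightarrow> j \<le> M + 1 \<Longrightarrow> V j \<in> carrier_mat n (2 * q * j)"
    and V_orth: "\<And>j. 1 \<le> j \<Longrightarrow> j \<le> M + 1 \<Longrightarrow> transpose_mat (V j) * V j = 1\<^sub>m (2 * q * j)"
    and V_span: "\<And>j. 1 \<le> j \<Longrightarrow> j \<le> M + 1 \<Longrightarrow> col_space (V j) = EK A Ainv (transpose_mat C) j"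
    and V_nested: "\<And>j i c. 1 \<le> j \<Longrightarrow> j \<le> M \<Longrightarrow> i < n \<Longrightarrow> c < 2 * q * j \<Longrightarrow>
      V (Suc j) $$ (i, c) = V j $$ (i, c)"
    and g: "transpose_mat C = V 1 * g" and j: "1 \<le> j" "j \<le> M"
  shows "V (Suc j) \<in> carrier_mat n (2 * q * Suc j)"
    and "transpose_mat (V (Suc j)) * V (Suc j) = 1\<^sub>m (2 * q * Suc j)"
    and "V j = V (Suc j) * Efirst (2 * q * Suc j) (2 * q * j)"
    and "A * V j = V (Suc j) * (transpose_mat (V (Suc j)) * A * V j)"
    and "transpose_mat C = V (Suc j) * Efirst (2 * q * Suc j) (2 * q) * g"
proof -
  have nest: "V i = V (Suc j) * Efirst (2 * q * Suc j) (2 * q * i)" if "1 \<le> i" "i \<le> j" for i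
    using nested_basis_eq_Efirst[of "Suc M" V n "2 * q" i "Suc j"] V_dim V_nested that j by simp
  show "V (Suc j) \<in> carrier_mat n (2 * q * Suc j)"
    and "transpose_mat (V (Suc j)) * V (Suc j) = 1\<^sub>m (2 * q * Suc j)"
    using V_dim[of "Suc j"] V_orth[of "Suc j"] j by simp_all
  show "V j = V (Suc j) * Efirst (2 * q * Suc j) (2 * q * j)"
    using nest[of j] j by simp
  show "transpose_mat C = V (Suc j) * Efirst (2 * q * Suc j) (2 * q) * g"
    using g nest[of 1] j by simp
  show "A * V j = V (Suc j) * (transpose_mat (V (Suc j)) * A * V j)"
    using j V_dim[of j] V_dim[of "Suc j"] V_orth[of "Suc j"] V_span[of j] V_span[of "Suc j"] C
    by (intro arnoldi_relation[OF A, of "transpose_mat C" q]) auto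
qed

section \<open>Block form of the residuals\<close>

text \<open>These express the splitting \<open>Tu = [T; H]\<close> along \<open>[Efirst K a, Elast K s]\<close>, in the
  right-nested normal form produced by \<open>mat_dim_simps\<close> so that they apply as rewrite rules after
  expansion.\<close>
lemma arnoldi_block_rules:
  fixes A U Vm Tu :: "real mat"
  assumes U: "U \<in> carrier_mat n K" "transpose_mat U * U = 1\<^sub>m K" and K: "a + s = K"
    and A: "A \<in> carrier_mat n n" and Tu: "Tu \<in> carrier_mat K a"
    and Vm: "Vm = U * Efirst K a" and AV: "A * Vm = U * Tu"
  defines "T \<equiv> transpose_mat Vm * A * Vm" and "H \<equiv> transpose_mat (Elast K s) * Tu"
  shows "dim_row Z = a \<Longrightarrow>
      A * (U * (Efirst K a * Z)) = U * (Efirst K a * (T * Z)) + U * (Elast K s * (H * Z))"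
    and "transpose_mat (Efirst K a) * (transpose_mat U * transpose_mat A)
      = transpose_mat T * (transpose_mat (Efirst K a) * transpose_mat U)
        + transpose_mat H * (transpose_mat (Elast K s) * transpose_mat U)"
proof -
  let ?e = "Efirst K a" and ?f = "Elast K s"
  have [simp]: "dim_row U = n" "dim_col U = K" "dim_row A = n" "dim_col A = n" "dim_row Tu = K"
    "dim_col Tu = a" "dim_row H = s" "dim_col H = a" "dim_row T = a" "dim_col T = a"
    using U A Tu by (auto simp: H_def T_def Vm)
  have T_eq: "T = transpose_mat ?e * Tu"
  proof -
    have "T = transpose_mat ?e * ((transpose_mat U * U) * Tu)"
      unfolding T_def using AV Vm by (simp add: mat_dim_simps)
    then show ?thesis using U by simp
  qed
  have Tu_split: "Tu = ?e * T + ?f * H"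
  proof -
    have "Tu = (?e * transpose_mat ?e + ?f * transpose_mat ?f) * Tu"
      using Efirst_Elast_partition[OF K] by simp
    then show ?thesis unfolding T_eq H_def by (simp add: mat_dim_simps)
  qed
  have AU: "A * (U * (?e * Z)) = U * (?e * (T * Z)) + U * (?f * (H * Z))" if "dim_row Z = a" for Z
  proof -
    have "A * (U * (?e * Z)) = (A * (U * ?e)) * Z"
      using that by (simp add: mat_dim_simps)
    also have "\<dots> = U * (?e * T + ?f * H) * Z"
      unfolding AV[unfolded Vm] by (subst Tu_split) (rule refl)
    finally show ?thesis using that by (simp add: mat_dim_simps)
  qed
  then show "dim_row Z = a \<Longrightarrow> A * (U * (?e * Z)) = U * (?e * (T * Z)) + U * (?f * (H * Z))" .
  have "transpose_mat (A * (U * ?e)) = transpose_mat (U * (?e * T) + U * (?f * H))"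
    using AU[of "1\<^sub>m a"] by simp
  then show "transpose_mat ?e * (transpose_mat U * transpose_mat A)
      = transpose_mat T * (transpose_mat ?e * transpose_mat U) + transpose_mat H * (transpose_mat ?f * transpose_mat U)"
    by (simp add: mat_dim_simps)
qed

lemma Efirst_factor_rules:
  fixes U g X :: "real mat"
  assumes U: "U \<in> carrier_mat n K" and g: "g \<in> carrier_mat s q" and "s \<le> a" "a \<le> K"
    and X: "X = U * Efirst K s * g"
  shows "X = U * (Efirst K a * (Efirst a s * g))"
    and "transpose_mat X = transpose_mat g * (transpose_mat (Efirst a s) * (transpose_mat (Efirst K a) * transpose_mat U))"
proof -
  show X': "X = U * (Efirst K a * (Efirst a s * g))"
    unfolding X using Efirst_mult_Efirst[of s a K, symmetric] assms by (simp add: mat_dim_simps)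
  show "transpose_mat X = transpose_mat g * (transpose_mat (Efirst a s) * (transpose_mat (Efirst K a) * transpose_mat U))"
    unfolding X' using U g by (simp add: mat_dim_simps)
qed

lemma riccati_eq_sym_block:
  fixes A B C U Vm Tu g Y :: "real mat"
  assumes U: "U \<in> carrier_mat n K" "transpose_mat U * U = 1\<^sub>m K" and K: "a + s = K" "s \<le> a"
    and A: "A \<in> carrier_mat n n" and B: "B \<in> carrier_mat n p" and g: "g \<in> carrier_mat s q"
    and C: "transpose_mat C = U * Efirst K s * g"
    and Y: "Y \<in> carrier_mat a a" "transpose_mat Y = Y"
    and Tu: "Tu \<in> carrier_mat K a" and Vm: "Vm = U * Efirst K a" and AV: "A * Vm = U * Tu"
  defines "T \<equiv> transpose_mat Vm * A * Vm" and "Bm \<equiv> transpose_mat Vm * B"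
  shows "riccati A B C (Vm * Y * transpose_mat Vm) = U * sym_block (Efirst K a) (Elast K s)
      (T * Y + Y * transpose_mat T - Y * Bm * transpose_mat Bm * Y
        + Efirst a s * g * transpose_mat g * transpose_mat (Efirst a s))
      (transpose_mat (Elast K s) * Tu * Y) * transpose_mat U"
proof -
  note rules = arnoldi_block_rules[OF U K(1) A Tu Vm AV, folded T_def]
  have aK: "a \<le> K" using K by simp
  note CT = Efirst_factor_rules[OF U(1) g K(2) aK C]
  have C_eq: "C = transpose_mat g * (transpose_mat (Efirst a s) * (transpose_mat (Efirst K a) * transpose_mat U))"
    using CT(2) K by simp
  have [simp]: "dim_row U = n" "dim_col U = K" "dim_row A = n" "dim_col A = n" "dim_row Y = a"
    "dim_col Y = a" "dim_row Tu = K" "dim_col Tu = a" "dim_row B = n" "dim_col B = p"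
    "dim_row g = s" "dim_col g = q" "dim_row T = a" "dim_col T = a" "dim_col C = n"
    using U A Y Tu B g arg_cong[OF C, of dim_row] by (auto simp: T_def Vm)
  show ?thesis
    unfolding riccati_def sym_block_def sym_corner_def Bm_def Vm
    apply (subst (2) C_eq)
    apply (simp add: mat_dim_simps rules CT(1) Y(2) K)
    apply (rule eq_matI)
      apply (simp_all del: index_mult_mat(1))
    done
qed

lemma newton_residual_eq_sym_block:
  fixes A B C P Vm Tu g Yh Yt :: "real mat"
  assumes P: "P \<in> carrier_mat n K" "transpose_mat P * P = 1\<^sub>m K" and K: "b + s = K" "s \<le> b"
    and A: "A \<in> carrier_mat n n" and B: "B \<in> carrier_mat n p" and g: "g \<in> carrier_mat s q"
    and C: "transpose_mat C = P * Efirst K s * g"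
    and Yh: "Yh \<in> carrier_mat b b" and Yt: "Yt \<in> carrier_mat b b" "transpose_mat Yt = Yt"
    and Tu: "Tu \<in> carrier_mat K b" and Vm: "Vm = P * Efirst K b" and AV: "A * Vm = P * Tu"
  defines "T \<equiv> transpose_mat Vm * A * Vm" and "Bm \<equiv> transpose_mat Vm * B"
  assumes lyap: "(T - Yh * Bm * transpose_mat Bm) * Yt + Yt * transpose_mat (T - Yh * Bm * transpose_mat Bm)
      = - (Yh * Bm * transpose_mat Bm * Yh) - Efirst b s * g * transpose_mat g * transpose_mat (Efirst b s)"
  defines "X \<equiv> Vm * Yh * transpose_mat Vm" and "Xt \<equiv> Vm * Yt * transpose_mat Vm"
  shows "(A - X * B * transpose_mat B) * Xt + Xt * transpose_mat (A - X * B * transpose_mat B)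
      + X * B * transpose_mat B * X + transpose_mat C * C
    = P * sym_block (Efirst K b) (Elast K s) (0\<^sub>m b b) (transpose_mat (Elast K s) * Tu * Yt) * transpose_mat P"
proof -
  let ?e = "Efirst K b" and ?E1 = "Efirst b s"
  note rules = arnoldi_block_rules[OF P K(1) A Tu Vm AV, folded T_def]
  have bK: "b \<le> K" using K by simp
  note CT = Efirst_factor_rules[OF P(1) g K(2) bK C]
  have C_eq: "C = transpose_mat g * (transpose_mat ?E1 * (transpose_mat ?e * transpose_mat P))"
    using CT(2) by simp
  have [simp]: "dim_row P = n" "dim_col P = K" "dim_row A = n" "dim_col A = n" "dim_row Yh = b"
    "dim_col Yh = b" "dim_row Yt = b" "dim_col Yt = b" "dim_row Tu = K" "dim_col Tu = b"
    "dim_row B = n" "dim_col B = p" "dim_row g = s" "dim_col g = q"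
    "dim_row T = b" "dim_col T = b" "dim_row Bm = b" "dim_col Bm = p" "dim_col C = n"
    using P A Yh Yt Tu B g arg_cong[OF C, of dim_row] by (auto simp: T_def Bm_def Vm)
  define D where "D = (T - Yh * Bm * transpose_mat Bm) * Yt + Yt * transpose_mat (T - Yh * Bm * transpose_mat Bm)
      + Yh * Bm * transpose_mat Bm * Yh + ?E1 * g * transpose_mat g * transpose_mat ?E1"
  have D: "D = 0\<^sub>m b b"
  proof (rule eq_matI)
    fix i j assume "i < dim_row (0\<^sub>m b b :: real mat)" "j < dim_col (0\<^sub>m b b :: real mat)"
    then show "D $$ (i, j) = 0\<^sub>m b b $$ (i, j)"
      using arg_cong[OF lyap, of "\<lambda>M. M $$ (i, j)"] unfolding D_def by simp
  qed (simp_all add: D_def)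
  have expand: "(A - X * B * transpose_mat B) * Xt + Xt * transpose_mat (A - X * B * transpose_mat B)
      + X * B * transpose_mat B * X + transpose_mat C * C
    = P * sym_block ?e (Elast K s) (0\<^sub>m b b) (transpose_mat (Elast K s) * Tu * Yt) * transpose_mat P
      + P * (?e * D * transpose_mat ?e) * transpose_mat P"
    unfolding X_def Xt_def sym_block_def sym_corner_def D_def Bm_def Vm
    apply (subst (2) C_eq)
    apply (simp add: mat_dim_simps rules CT(1) Yt(2) K)
    apply (rule eq_matI)
      apply (simp_all del: index_mult_mat(1))
    done
  have "P * (?e * D * transpose_mat ?e) * transpose_mat P = 0\<^sub>m n n"
    unfolding D using P by simp
  moreover have "sym_block ?e (Elast K s) (0\<^sub>m b b) (transpose_mat (Elast K s) * Tu * Yt) \<in> carrier_mat K K"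
    using Tu Yt(1) by (intro sym_block_carrier[of _ K b _ s] carrier_matI) simp_all
  ultimately show ?thesis
    unfolding expand using P by (simp add: right_add_zero_mat[OF carrier_matI])
qed

lemma correction_eq_sym_block:
  fixes P Vm B Yh Yt :: "real mat"
  assumes P: "P \<in> carrier_mat n K" and B: "B \<in> carrier_mat n p"
    and Yh: "Yh \<in> carrier_mat b b" and Yt: "Yt \<in> carrier_mat b b" and Vm: "Vm = P * Efirst K b"
  shows "(Vm * Yt * transpose_mat Vm - Vm * Yh * transpose_mat Vm) * B * transpose_mat B
      * (Vm * Yt * transpose_mat Vm - Vm * Yh * transpose_mat Vm)
    = P * sym_block (Efirst K b) (Elast K s)
        ((Yt - Yh) * (transpose_mat Vm * B) * transpose_mat (transpose_mat Vm * B) * (Yt - Yh)) (0\<^sub>m s b)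
      * transpose_mat P"
proof -
  have [simp]: "dim_row P = n" "dim_col P = K" "dim_row Yh = b" "dim_col Yh = b"
    "dim_row Yt = b" "dim_col Yt = b" "dim_row B = n" "dim_col B = p"
    using P Yh Yt B by auto
  show ?thesis
    unfolding Vm sym_block_def sym_corner_def
    by (simp add: mat_dim_simps) (rule eq_matI, simp_all del: index_mult_mat(1))
qed

lemma frob_inner_conj_sym_block:
  assumes P: "P \<in> carrier_mat n K" "transpose_mat P * P = 1\<^sub>m K" and K: "a + s = K"
    and M: "M \<in> carrier_mat a a" "M' \<in> carrier_mat a a" and H: "H \<in> carrier_mat s a" "H' \<in> carrier_mat s a"
  shows "frob_inner (P * sym_block (Efirst K a) (Elast K s) M H * transpose_mat P)
      (P * sym_block (Efirst K a) (Elast K s) M' H' * transpose_mat P)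
    = frob_inner M M' + 2 * frob_inner H H'"
proof -
  have e: "Efirst K a \<in> carrier_mat K a" "transpose_mat (Efirst K a) * Efirst K a = 1\<^sub>m a"
    and f: "Elast K s \<in> carrier_mat K s" "transpose_mat (Elast K s) * Elast K s = 1\<^sub>m s"
    and ef: "transpose_mat (Efirst K a) * Elast K s = 0\<^sub>m a s"
    using K by (auto simp: transpose_Efirst_mult_Efirst transpose_Elast_mult_Elast transpose_Efirst_mult_Elast)
  have "frob_inner (P * sym_block (Efirst K a) (Elast K s) M H * transpose_mat P)
      (P * sym_block (Efirst K a) (Elast K s) M' H' * transpose_mat P)
    = frob_inner (sym_block (Efirst K a) (Elast K s) M H) (sym_block (Efirst K a) (Elast K s) M' H')"
    by (intro frob_inner_conj_orthonormal[OF P P] sym_block_carrier[OF e(1) f(1)] M H)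
  also have "\<dots> = frob_inner M M' + 2 * frob_inner H H'"
    by (rule frob_inner_sym_block[OF e f ef M H])
  finally show ?thesis .
qed

lemma conj_Efirst_eq_pad_diag:
  "V \<in> carrier_mat n b \<Longrightarrow> S \<in> carrier_mat a a \<Longrightarrow> a \<le> b \<Longrightarrow>
   V * Efirst b a * S * transpose_mat (V * Efirst b a) = V * pad_diag S b * transpose_mat V"
  by (simp add: pad_diag_eq_Efirst mat_dim_simps)

lemma conj_Efirst_eq_sym_block:
  assumes V: "V \<in> carrier_mat n K" and S: "S \<in> carrier_mat r r" and r: "r \<le> b" and K: "b + s = K"
  shows "V * Efirst K r * S * transpose_mat (V * Efirst K r)
    = V * sym_block (Efirst K b) (Elast K s) (pad_diag S b) (0\<^sub>m s b) * transpose_mat V"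
proof -
  have comp: "Efirst K b * Efirst b r = Efirst K r" using r K by (simp add: Efirst_mult_Efirst)
  then have "Efirst K b * (Efirst b r * Z) = Efirst K r * Z" if "dim_row Z = r" for Z
    using that by (simp flip: assoc_mult_mat_dim)
  moreover have "transpose_mat (Efirst b r) * transpose_mat (Efirst K b) = transpose_mat (Efirst K r)"
    by (simp flip: comp transpose_mult_dim)
  ultimately have "sym_block (Efirst K b) (Elast K s) (pad_diag S b) (0\<^sub>m s b) = pad_diag S K"
    using S r K unfolding sym_block_def sym_corner_def
    by (simp add: pad_diag_eq_Efirst mat_dim_simps) (rule eq_matI, simp_all del: index_mult_mat(1))
  then show ?thesis
    using conj_Efirst_eq_pad_diag[OF V S] r K by simp
qed

lemma lead_sub_lead_sub: "r \<le> r' \<Longrightarrow> lead_sub (lead_sub W r') r = lead_sub W r"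
  by (rule eq_matI) (auto simp: lead_sub_def)

lemma frob_inner_pad_diag:
  assumes S: "S \<in> carrier_mat r r" and W: "W \<in> carrier_mat b b" and r: "r \<le> b"
  shows "frob_inner (pad_diag S b) W = frob_inner S (lead_sub W r)"
proof -
  let ?E = "Efirst b r"
  have "frob_inner (pad_diag S b) W = frob_inner (?E * (S * transpose_mat ?E)) W"
    using S r by (simp add: pad_diag_eq_Efirst assoc_mult_mat_dim)
  also have "\<dots> = frob_inner (S * transpose_mat ?E) (transpose_mat ?E * W)"
    using S W by (intro frob_inner_mult_left) auto
  also have "\<dots> = frob_inner S (transpose_mat ?E * W * transpose_mat (transpose_mat ?E))"
    using S W by (intro frob_inner_mult_right) auto
  also have "\<dots> = frob_inner S (lead_sub W r)"
    using W r by (simp add: lead_sub_eq_Efirst)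
  finally show ?thesis .
qed

lemma frob_inner_pad_diag_sym_block:
  assumes K: "a + s = K" "K \<le> b" and R: "R \<in> carrier_mat a a" and H: "H \<in> carrier_mat s a"
    and W: "W \<in> carrier_mat b b"
  shows "frob_inner (pad_diag (sym_block (Efirst K a) (Elast K s) R H) b) W
    = frob_inner R (lead_sub W a) + frob_inner (sym_corner (Efirst K a) (Elast K s) H) (lead_sub W K)"
proof -
  let ?e = "Efirst K a" and ?W = "lead_sub W K"
  have W': "?W \<in> carrier_mat K K" by (simp add: lead_sub_def)
  have C: "?e * R * transpose_mat ?e \<in> carrier_mat K K" "sym_corner ?e (Elast K s) H \<in> carrier_mat K K"
    using R H by (auto simp: sym_corner_def)
  have "frob_inner (pad_diag (sym_block ?e (Elast K s) R H) b) W = frob_inner (sym_block ?e (Elast K s) R H) ?W"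
    using R H by (intro frob_inner_pad_diag[OF _ W K(2)] sym_block_carrier[of _ K a _ s]) auto
  also have "\<dots> = frob_inner (?e * R * transpose_mat ?e) ?W + frob_inner (sym_corner ?e (Elast K s) H) ?W"
    unfolding sym_block_def by (rule frob_inner_add_left[OF C W'])
  also have "frob_inner (?e * R * transpose_mat ?e) ?W = frob_inner R (lead_sub ?W a)"
    using frob_inner_pad_diag[OF R W'] K R by (simp add: pad_diag_eq_Efirst)
  finally show ?thesis
    using K by (simp add: lead_sub_lead_sub)
qed

lemma pad_corner_eq_sym_corner:
  fixes Y Tu :: "real mat"
  assumes K: "a + s = K" and Y: "Y \<in> carrier_mat a a" "transpose_mat Y = Y" and Tu: "Tu \<in> carrier_mat K a"
  shows "Elast K s * transpose_mat (Elast K s) * Tu * pad_right Y s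
      + pad_below Y s * transpose_mat Tu * Elast K s * transpose_mat (Elast K s)
    = sym_corner (Efirst K a) (Elast K s) (transpose_mat (Elast K s) * Tu * Y)"
proof -
  have "pad_right Y s = Y * transpose_mat (Efirst K a)" "pad_below Y s = Efirst K a * Y"
    using K Y by (auto simp: pad_right_eq_Efirst pad_below_eq_Efirst)
  then show ?thesis
    using Y Tu unfolding sym_corner_def by (simp add: mat_dim_simps)
qed

theorem proposition2:
  fixes n p q m m' :: nat
    and A Ainv B C g Y Yt :: "real mat"
    and V T Tu Bm :: "nat \<Rightarrow> real mat"
    and X Yh Q Xt Z L D W E1m Em1 Em'1 R N :: "real mat"
  assumes A: "A \<in> carrier_mat n n"
    and Ainv: "Ainv \<in> carrier_mat n n" "A * Ainv = 1\<^sub>m n" "Ainv * A = 1\<^sub>m n"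
    and B: "B \<in> carrier_mat n p"
    and C: "C \<in> carrier_mat q n"
    and V_dim: "\<And>j. 1 \<le> j \<Longrightarrow> j \<le> m' + 1 \<Longrightarrow> V j \<in> carrier_mat n (2 * q * j)"
    and V_orth: "\<And>j. 1 \<le> j \<Longrightarrow> j \<le> m' + 1 \<Longrightarrow>
                    transpose_mat (V j) * V j = 1\<^sub>m (2 * q * j)"
    and V_span: "\<And>j. 1 \<le> j \<Longrightarrow> j \<le> m' + 1 \<Longrightarrow>
                    col_space (V j) = EK A Ainv (transpose_mat C) j"
    and V_nested: "\<And>j i c. 1 \<le> j \<Longrightarrow> j \<le> m' \<Longrightarrow> i < n \<Longrightarrow> c < 2 * q * j \<Longrightarrow>
                    V (Suc j) $$ (i, c) = V j $$ (i, c)"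
    and g: "g \<in> carrier_mat (2 * q) q" "transpose_mat C = V 1 * g"
    and m: "1 \<le> m" "m \<le> m'"
    and Y: "Y \<in> carrier_mat (2 * q * m) (2 * q * m)" "transpose_mat Y = Y"
    and Yt: "Yt \<in> carrier_mat (2 * q * m') (2 * q * m')" "transpose_mat Yt = Yt"
  assumes "T = (\<lambda>j. transpose_mat (V j) * A * V j)"
    and "Tu = (\<lambda>j. transpose_mat (V (Suc j)) * A * V j)"
    and "Bm = (\<lambda>j. transpose_mat (V j) * B)"
    and "X = V m * Y * transpose_mat (V m)"
    and "Yh = pad_diag Y (2 * q * m')"
    and "Q = T m' - Yh * Bm m' * transpose_mat (Bm m')"
  assumes Yt_sol: "Q * Yt + Yt * transpose_mat Q =
      - (Yh * Bm m' * transpose_mat (Bm m') * Yh)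
      - Efirst (2 * q * m') (2 * q) * g * transpose_mat g * transpose_mat (Efirst (2 * q * m') (2 * q))"
  assumes "Xt = V m' * Yt * transpose_mat (V m')"
    and "Z = Xt - X"
    and "L = (A - X * B * transpose_mat B) * Xt + Xt * transpose_mat (A - X * B * transpose_mat B)
             + X * B * transpose_mat B * X + transpose_mat C * C"
    and "D = Yt - Yh"
    and "W = D * Bm m' * transpose_mat (Bm m') * D"
    and "E1m = Efirst (2 * q * m) (2 * q)"
    and "Em1 = Elast (2 * q * (m + 1)) (2 * q)"
    and "Em'1 = Elast (2 * q * (m' + 1)) (2 * q)"
    and "R = T m * Y + Y * transpose_mat (T m) - Y * Bm m * transpose_mat (Bm m) * Y
             + E1m * g * transpose_mat g * transpose_mat E1m"
    and "N = Em1 * transpose_mat Em1 * Tu m * pad_right Y (2 * q)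
             + pad_below Y (2 * q) * transpose_mat (Tu m) * Em1 * transpose_mat Em1"
  shows "((frob_norm (riccati A B C X))\<^sup>2
           = (frob_norm R)\<^sup>2 + 2 * (frob_norm (Y * transpose_mat (Tu m) * Em1))\<^sup>2)
    \<and> ((frob_norm L)\<^sup>2 = 2 * (frob_norm (Yt * transpose_mat (Tu m') * Em'1))\<^sup>2)
    \<and> ((frob_norm (Z * B * transpose_mat B * Z))\<^sup>2 = (frob_norm W)\<^sup>2)
    \<and> (frob_inner L (Z * B * transpose_mat B * Z) = 0)
    \<and> (frob_inner (riccati A B C X) L =
           (if m' = m then 2 * frob_inner (transpose_mat Em1 * Tu m * Y) (transpose_mat Em'1 * Tu m' * Yt)
            else 0))
    \<and> (frob_inner (riccati A B C X) (Z * B * transpose_mat B * Z) =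
           (if m' = m then frob_inner R W
            else frob_inner R (lead_sub W (2 * q * m))
                 + frob_inner N (lead_sub W (2 * q * (m + 1)))))"
proof -
  note T_def = assms(19) and Tu_def = assms(20) and Bm_def = assms(21) and X_def = assms(22)
    and Yh_def = assms(23) and Q_def = assms(24) and Xt_def = assms(26) and Z_def = assms(27)
    and L_def = assms(28) and D_def = assms(29) and W_def = assms(30) and E1m_def = assms(31)
    and Em1_def = assms(32) and Em'1_def = assms(33) and R_def = assms(34) and N_def = assms(35)
  let ?P = "V (Suc m')" and ?K = "2 * q * Suc m'" and ?b = "2 * q * m'"
  have m'_pos: "1 \<le> m'" using m by simp
  have nest: "V j = V k * Efirst (2 * q * k) (2 * q * j)" if "1 \<le> j" "j \<le> k" "k \<le> Suc m'" for j k
    using nested_basis_eq_Efirst[of "Suc m'" V n "2 * q" j k] V_dim V_nested that by simp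
  have krylov: "V (Suc j) \<in> carrier_mat n (2 * q * Suc j)"
    "transpose_mat (V (Suc j)) * V (Suc j) = 1\<^sub>m (2 * q * Suc j)"
    "V j = V (Suc j) * Efirst (2 * q * Suc j) (2 * q * j)"
    "A * V j = V (Suc j) * (transpose_mat (V (Suc j)) * A * V j)"
    "transpose_mat C = V (Suc j) * Efirst (2 * q * Suc j) (2 * q) * g" if "1 \<le> j" "j \<le> m'" for j
    by (rule extended_krylov_basis[where V = V and M = m', OF A Ainv(1,2) C _ _ _ _ g(2) that];
        (rule V_dim V_orth V_span V_nested; assumption))+
  have Tu: "Tu j \<in> carrier_mat (2 * q * Suc j) (2 * q * j)"
    and arnoldi: "A * V j = V (Suc j) * Tu j" if "1 \<le> j" "j \<le> m'" for j
    unfolding Tu_def using A V_dim[of j] krylov(1,4)[OF that] that by simp_all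
  have Em1: "Em1 = Elast (2 * q * Suc m) (2 * q)" and Em'1: "Em'1 = Elast ?K (2 * q)"
    using Em1_def Em'1_def by simp_all
  have Yh: "Yh \<in> carrier_mat ?b ?b"
    unfolding Yh_def by (simp add: pad_diag_def)
  have X_m': "X = V m' * Yh * transpose_mat (V m')"
    unfolding X_def Yh_def using nest[of m m'] m V_dim[of m'] Y(1) by (simp add: conj_Efirst_eq_pad_diag)
  have RX: "riccati A B C X = V (Suc m) * sym_block (Efirst (2 * q * Suc m) (2 * q * m))
      (Elast (2 * q * Suc m) (2 * q)) R (transpose_mat Em1 * Tu m * Y) * transpose_mat (V (Suc m))"
    unfolding R_def T_def Bm_def E1m_def Em1 X_def
    by (rule riccati_eq_sym_block[OF krylov(1,2)[OF m] _ _ A B g(1) krylov(5)[OF m] Y Tu[OF m] krylov(3)[OF m]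
          arnoldi[OF m]]) (use m in simp_all)
  have LP: "L = ?P * sym_block (Efirst ?K ?b) (Elast ?K (2 * q)) (0\<^sub>m ?b ?b)
      (transpose_mat Em'1 * Tu m' * Yt) * transpose_mat ?P"
    using Yt_sol unfolding L_def X_m' Xt_def Em'1 Q_def T_def Bm_def
    by (intro newton_residual_eq_sym_block[OF krylov(1,2)[OF m'_pos order.refl] _ _ A B g(1) krylov(5)[OF m'_pos order.refl]
          Yh Yt Tu[OF m'_pos order.refl] krylov(3)[OF m'_pos order.refl] arnoldi[OF m'_pos order.refl]])
      (use m in simp_all)
  have ZP: "Z * B * transpose_mat B * Z
      = ?P * sym_block (Efirst ?K ?b) (Elast ?K (2 * q)) W (0\<^sub>m (2 * q) ?b) * transpose_mat ?P"
    unfolding Z_def Xt_def X_m' W_def D_def Bm_def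
    by (rule correction_eq_sym_block[OF krylov(1)[OF m'_pos order.refl] B Yh Yt(1) krylov(3)[OF m'_pos order.refl]])
  define t t' where "t = transpose_mat Em1 * Tu m * Y" and "t' = transpose_mat Em'1 * Tu m' * Yt"
  have t: "t \<in> carrier_mat (2 * q) (2 * q * m)" "Y * transpose_mat (Tu m) * Em1 = transpose_mat t"
    unfolding t_def Em1 using Tu[OF m] Y by (auto simp: mat_dim_simps)
  have t': "t' \<in> carrier_mat (2 * q) ?b" "Yt * transpose_mat (Tu m') * Em'1 = transpose_mat t'"
    unfolding t'_def Em'1 using Tu[OF m'_pos order.refl] Yt by (auto simp: mat_dim_simps)
  have R: "R \<in> carrier_mat (2 * q * m) (2 * q * m)"
    unfolding R_def T_def Bm_def E1m_def using A B Y(1) g(1) V_dim[of m] m by auto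
  have W: "W \<in> carrier_mat ?b ?b"
    unfolding W_def D_def Bm_def using B Yh Yt(1) V_dim[of m'] m by auto
  have zero: "0\<^sub>m ?b ?b \<in> carrier_mat ?b ?b" "0\<^sub>m (2 * q) ?b \<in> carrier_mat (2 * q) ?b" by simp_all
  have K: "?b + 2 * q = ?K" by simp
  note inner_P = frob_inner_conj_sym_block[OF krylov(1,2)[OF m'_pos order.refl] K]
  have alpha: "(frob_norm (riccati A B C X))\<^sup>2 = (frob_norm R)\<^sup>2 + 2 * (frob_norm (Y * transpose_mat (Tu m) * Em1))\<^sup>2"
    unfolding t(2) frob_norm_transpose frob_norm_square RX t_def[symmetric]
    by (rule frob_inner_conj_sym_block[OF krylov(1,2)[OF m] _ R R t(1) t(1)]) simp
  have beta: "(frob_norm L)\<^sup>2 = 2 * (frob_norm (Yt * transpose_mat (Tu m') * Em'1))\<^sup>2"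
    unfolding t'(2) frob_norm_transpose frob_norm_square LP t'_def[symmetric]
    using inner_P[OF zero(1) zero(1) t'(1) t'(1)] by (simp add: frob_inner_zero_left)
  have delta: "(frob_norm (Z * B * transpose_mat B * Z))\<^sup>2 = (frob_norm W)\<^sup>2"
    unfolding frob_norm_square ZP using inner_P[OF W W zero(2) zero(2)] by (simp add: frob_inner_zero_left)
  have zeta: "frob_inner L (Z * B * transpose_mat B * Z) = 0"
    unfolding LP ZP t'_def[symmetric] using inner_P[OF zero(1) W t'(1) zero(2)] W t'(1)
    by (simp add: frob_inner_zero_left frob_inner_zero_right)
  have gamma_epsilon: "frob_inner (riccati A B C X) L = (if m' = m then 2 * frob_inner t t' else 0)
    \<and> frob_inner (riccati A B C X) (Z * B * transpose_mat B * Z) = (if m' = m then frob_inner R W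
        else frob_inner R (lead_sub W (2 * q * m)) + frob_inner N (lead_sub W (2 * q * (m + 1))))"
  proof (cases "m' = m")
    case True
    then have RX': "riccati A B C X
        = ?P * sym_block (Efirst ?K ?b) (Elast ?K (2 * q)) R t * transpose_mat ?P"
      and R': "R \<in> carrier_mat ?b ?b" "t \<in> carrier_mat (2 * q) ?b"
      using RX R t(1) unfolding t_def by simp_all
    show ?thesis
      unfolding RX' LP ZP t'_def[symmetric]
      using True inner_P[OF R'(1) zero(1) R'(2) t'(1)] inner_P[OF R'(1) W R'(2) zero(2)] R'
      by (simp add: frob_inner_zero_right)
  next
    case False
    let ?k = "2 * q * Suc m"
    let ?S = "sym_block (Efirst ?k (2 * q * m)) (Elast ?k (2 * q)) R t"
    have k: "?k \<le> ?b" using False m by (intro mult_le_mono2) simp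
    have S: "?S \<in> carrier_mat ?k ?k"
      by (rule sym_block_carrier[OF Efirst_carrier(3) Elast_carrier(3) R t(1)])
    have pad: "pad_diag ?S ?b \<in> carrier_mat ?b ?b"
      by (simp add: pad_diag_def)
    have "riccati A B C X = ?P * Efirst ?K ?k * ?S * transpose_mat (?P * Efirst ?K ?k)"
      unfolding RX t_def[symmetric] using nest[of "Suc m" "Suc m'"] m by simp
    also have "\<dots> = ?P * sym_block (Efirst ?K ?b) (Elast ?K (2 * q)) (pad_diag ?S ?b) (0\<^sub>m (2 * q) ?b)
        * transpose_mat ?P"
      by (rule conj_Efirst_eq_sym_block[OF krylov(1)[OF m'_pos order.refl] S k]) simp
    finally have RX': "riccati A B C X = \<dots>" .
    have N: "N = sym_corner (Efirst ?k (2 * q * m)) (Elast ?k (2 * q)) t"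
      unfolding N_def Em1 t_def using pad_corner_eq_sym_corner[of "2 * q * m" "2 * q" ?k, OF _ Y Tu[OF m]] by simp
    show ?thesis
      unfolding RX' LP ZP N t'_def[symmetric]
      using False inner_P[OF pad zero(1) zero(2) t'(1)] inner_P[OF pad W zero(2) zero(2)] pad t'(1)
        frob_inner_pad_diag_sym_block[of "2 * q * m" "2 * q" ?k, OF _ k R t(1) W]
      by (simp add: frob_inner_zero_left frob_inner_zero_right)
  qed
  show ?thesis
    using alpha beta delta zeta gamma_epsilon unfolding t_def t'_def by simp
qed

end
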